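(* For all $R>0$ and $0<\nu<1/R$, and all integers $0\le k\le N$, $$\int_0^\nu rJ_k(rR)^2dr\ge\frac{9\nu^2}{32}\cdot\frac{(\nu R)^{2N}}{(N+1)2^{2N}(N!)^2}.$$
   Context: $J_k$ is the Bessel function of the first kind of integer order $k\ge0$, $J_k(z)=\sum_{m=0}^\infty(-1)^m\frac{(z/2)^{k+2m}}{m!\,(k+m)!}$. *)

theory Defs
  imports "HOL-Analysis.Analysis"
begin

definition besselJ :: "nat \<Rightarrow> real \<Rightarrow> real" where
  "besselJ k z = (\<Sum>m. (-1) ^ m * (z / 2) ^ (k + 2 * m) / (fact m * fact (k + m)))"

end

(* For 0 <= x <= 1 the power series of J_k is alternating with terms shrinking by a factor of
   at least 4, so J_k(x) >= 3/4 (x/2)^k / k!.  Squaring this for x = rR and integrating the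
   resulting monomial r^(2k+1) gives the bound for N = k; the right-hand side decreases in N
   because nu R < 1. *)
theory Submission
  imports Defs
begin

definition besselJ_term :: "nat \<Rightarrow> real \<Rightarrow> nat \<Rightarrow> real" where
  "besselJ_term k z m = (-1) ^ m * (z / 2) ^ (k + 2 * m) / (fact m * fact (k + m))"

lemma besselJ_eq_suminf: "besselJ k = (\<lambda>z. \<Sum>m. besselJ_term k z m)"
  by (simp add: fun_eq_iff besselJ_def besselJ_term_def)

lemma abs_besselJ_term:
  "\<bar>besselJ_term k z m\<bar> = \<bar>z / 2\<bar> ^ (k + 2 * m) / (fact m * fact (k + m))"
  by (simp add: besselJ_term_def abs_mult power_abs)

lemma abs_besselJ_term_le:
  assumes "\<bar>z\<bar> \<le> a"
  shows "\<bar>besselJ_term k z m\<bar> \<le> (a / 2) ^ k * ((a / 2)\<^sup>2 ^ m / fact m)"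
proof -
  have "\<bar>besselJ_term k z m\<bar> \<le> \<bar>z / 2\<bar> ^ (k + 2 * m) / fact m"
    unfolding abs_besselJ_term
    by (intro divide_left_mono) (auto intro: order_trans[OF _ mult_right_mono[OF fact_ge_1]])
  also have "\<dots> \<le> (a / 2) ^ (k + 2 * m) / fact m"
    using assms by (intro divide_right_mono power_mono) auto
  finally show ?thesis
    by (simp add: power_add power_mult)
qed

lemma summable_besselJ_majorant: "summable (\<lambda>m. c ^ k * ((c\<^sup>2) ^ m / fact m :: real))"
  using summable_mult[OF summable_exp[of "c\<^sup>2"], of "c ^ k"]
  by (simp add: divide_inverse mult_ac)

lemma summable_besselJ_term: "summable (besselJ_term k z)"
  by (rule summable_comparison_test[OF _ summable_besselJ_majorant])
    (use abs_besselJ_term_le[of z "\<bar>z\<bar>"] in auto)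

lemma uniform_limit_besselJ:
  "uniform_limit {-a..a} (\<lambda>n z. \<Sum>m<n. besselJ_term k z m) (besselJ k) sequentially"
  unfolding besselJ_eq_suminf
  by (rule Weierstrass_m_test[OF _ summable_besselJ_majorant[of "a / 2" k]])
    (use abs_besselJ_term_le[of _ a] in auto)

lemma isCont_besselJ: "isCont (besselJ k) x"
proof -
  let ?I = "{-(\<bar>x\<bar> + 1)..\<bar>x\<bar> + 1}"
  have "continuous_on ?I (besselJ k)"
    by (rule uniform_limit_theorem[OF _ uniform_limit_besselJ])
      (auto intro!: always_eventually continuous_intros simp: besselJ_term_def)
  moreover have "x \<in> interior ?I"
    by (auto simp: abs_if)
  ultimately show ?thesis
    using continuous_on_interior by blast
qed

lemma continuous_on_besselJ [continuous_intros]: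
  "continuous_on S f \<Longrightarrow> continuous_on S (\<lambda>x. besselJ k (f x))"
  by (rule continuous_on_compose2[of UNIV])
    (auto intro: continuous_at_imp_continuous_on isCont_besselJ)

text \<open>For \<open>0 \<le> x \<le> 2\<close> the series is alternating with decreasing terms, so it is
  bounded below by any partial sum with an even number of terms.\<close>
lemma besselJ_ge_two_terms:
  fixes x :: real
  assumes "0 \<le> x" "x \<le> 2"
  shows "(x / 2) ^ k / fact k - (x / 2) ^ (k + 2) / fact (k + 1) \<le> besselJ k x"
proof -
  define a where "a m = \<bar>besselJ_term k x m\<bar>" for m
  have term_eq: "besselJ_term k x = (\<lambda>m. (-1) ^ m * a m)"
    using assms by (simp add: fun_eq_iff a_def besselJ_term_def abs_mult)
  have a_nonneg: "0 \<le> a m" for m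
    by (simp add: a_def)
  have a_Suc: "a (Suc m) = a m * ((x / 2)\<^sup>2 / ((m + 1) * (k + m + 1)))" for m
    by (simp add: a_def abs_besselJ_term power_add power2_eq_square field_simps)
  have a_decr: "a (Suc m) \<le> a m" for m
  proof -
    define D where "D = real ((m + 1) * (k + m + 1))"
    have "(x / 2)\<^sup>2 \<le> 1"
      using assms by (simp add: power_le_one)
    also have "1 \<le> D"
      by (simp add: D_def)
    finally have "(x / 2)\<^sup>2 / D \<le> 1"
      using \<open>1 \<le> D\<close> by (simp add: divide_le_eq_1_pos)
    moreover have "a (Suc m) = a m * ((x / 2)\<^sup>2 / D)"
      by (simp add: a_Suc D_def)
    ultimately show ?thesis
      using mult_left_le[OF _ a_nonneg[of m]] by metis
  qed
  have a_lim: "a \<longlonglongrightarrow> 0"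
    unfolding a_def by (intro tendsto_rabs_zero summable_LIMSEQ_zero summable_besselJ_term)
  have "(\<Sum>i<2 * 1. (-1) ^ i * a i) \<le> (\<Sum>i. (-1) ^ i * a i)"
    by (rule summable_Leibniz'(2)[where a = a, OF a_lim a_nonneg a_decr])
  also have "\<dots> = besselJ k x"
    by (simp add: besselJ_eq_suminf term_eq)
  finally show ?thesis
    using assms by (simp add: numeral_2_eq_2 a_def abs_besselJ_term)
qed

lemma besselJ_ge_leading_term:
  fixes x :: real
  assumes "0 \<le> x" "x \<le> 1"
  shows "3 / 4 * ((x / 2) ^ k / fact k) \<le> besselJ k x"
proof -
  have "x\<^sup>2 \<le> 1"
    using assms by (simp add: power_le_one)
  then have "(x / 2)\<^sup>2 / (k + 1) \<le> 1 / 4"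
    by (simp add: power_divide field_simps)
  then have "(x / 2) ^ k / fact k * ((x / 2)\<^sup>2 / (k + 1)) \<le> (x / 2) ^ k / fact k * (1 / 4)"
    using assms by (intro mult_left_mono) auto
  moreover have "(x / 2) ^ (k + 2) / fact (k + 1) = (x / 2) ^ k / fact k * ((x / 2)\<^sup>2 / (k + 1))"
    by (simp add: power_add power2_eq_square field_simps)
  ultimately have "(x / 2) ^ (k + 2) / fact (k + 1) \<le> 1 / 4 * ((x / 2) ^ k / fact k)"
    by simp
  then show ?thesis
    using besselJ_ge_two_terms[of x k] assms by simp
qed

lemma has_integral_power:
  fixes a b :: real
  assumes "a \<le> b"
  shows "((\<lambda>x. x ^ n) has_integral (b ^ (n + 1) - a ^ (n + 1)) / (n + 1)) {a..b}"
proof -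
  have "((\<lambda>x. x ^ (n + 1) / (n + 1)) has_real_derivative x ^ n) (at x)" for x :: real
    using DERIV_cdivide[OF DERIV_pow[of "n + 1" x], of "n + 1"] by simp
  then show ?thesis
    using fundamental_theorem_of_calculus[OF assms, of "\<lambda>x. x ^ (n + 1) / (n + 1)"]
    by (simp add: has_real_derivative_iff_has_vector_derivative has_vector_derivative_at_within
        diff_divide_distrib)
qed

lemma integral_besselJ_sq_ge:
  fixes R \<nu> :: real
  assumes "0 \<le> R" "0 \<le> \<nu>" "\<nu> * R \<le> 1"
  shows "9 * \<nu>\<^sup>2 / 32 * ((\<nu> * R) ^ (2 * k) / (real (k + 1) * 2 ^ (2 * k) * (fact k)\<^sup>2))
           \<le> integral {0..\<nu>} (\<lambda>r. r * (besselJ k (r * R))\<^sup>2)"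
proof -
  define c where "c = 9 / 16 * (R / 2) ^ (2 * k) / (fact k)\<^sup>2"
  have lower: "((\<lambda>r. c * r ^ (2 * k + 1)) has_integral c * (\<nu> ^ (2 * k + 2) / (2 * k + 2))) {0..\<nu>}"
    using has_integral_mult_right[OF has_integral_power[OF assms(2), of "2 * k + 1"]]
    by (simp add: add.assoc)
  have "((\<lambda>r. r * (besselJ k (r * R))\<^sup>2) has_integral integral {0..\<nu>} (\<lambda>r. r * (besselJ k (r * R))\<^sup>2)) {0..\<nu>}"
    by (intro integrable_integral integrable_continuous_interval continuous_intros)
  moreover have "c * r ^ (2 * k + 1) \<le> r * (besselJ k (r * R))\<^sup>2" if r: "r \<in> {0..\<nu>}" for r
  proof -
    have "0 \<le> r * R" "r * R \<le> 1"
      using r assms mult_right_mono[of r \<nu> R] by auto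
    then have "(3 / 4 * ((r * R / 2) ^ k / fact k))\<^sup>2 \<le> (besselJ k (r * R))\<^sup>2"
      by (intro power_mono besselJ_ge_leading_term) auto
    then have "r * (3 / 4 * ((r * R / 2) ^ k / fact k))\<^sup>2 \<le> r * (besselJ k (r * R))\<^sup>2"
      using r by (intro mult_left_mono) auto
    then show ?thesis
      by (simp add: c_def power_mult_distrib power_divide power_mult field_simps)
  qed
  ultimately have "c * (\<nu> ^ (2 * k + 2) / (2 * k + 2)) \<le> integral {0..\<nu>} (\<lambda>r. r * (besselJ k (r * R))\<^sup>2)"
    by (rule has_integral_le[OF lower])
  then show ?thesis
    by (simp add: c_def power_mult_distrib power_divide power_add power2_eq_square field_simps)
qed

lemma decseq_power_div_fact_sq:
  fixes t :: real
  assumes "0 \<le> t" "t \<le> 1"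
  shows "decseq (\<lambda>n. t ^ (2 * n) / (real (n + 1) * 2 ^ (2 * n) * (fact n)\<^sup>2))"
proof (rule decseq_SucI, rule frac_le)
  fix n
  show "t ^ (2 * Suc n) \<le> t ^ (2 * n)"
    using assms by (intro power_decreasing) auto
  have "(fact n :: real)\<^sup>2 \<le> (fact (Suc n))\<^sup>2"
    by (intro power_mono) (auto simp: fact_mono)
  moreover have "(2::real) ^ (2 * n) \<le> 2 ^ (2 * Suc n)"
    by (intro power_increasing) auto
  ultimately show "real (n + 1) * 2 ^ (2 * n) * (fact n)\<^sup>2
      \<le> real (Suc n + 1) * 2 ^ (2 * Suc n) * (fact (Suc n))\<^sup>2"
    by (intro mult_mono) auto
qed (use assms in auto)

theorem lemma8p2:
  fixes R \<nu> :: real and k N :: nat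
  assumes "R > 0" and "0 < \<nu>" and "\<nu> < 1 / R" and "k \<le> N"
  shows "integral {0..\<nu>} (\<lambda>r. r * (besselJ k (r * R))\<^sup>2)
           \<ge> 9 * \<nu>\<^sup>2 / 32 * ((\<nu> * R) ^ (2 * N) / (real (N + 1) * 2 ^ (2 * N) * (fact N)\<^sup>2))"
proof -
  have "\<nu> * R \<le> 1"
    using assms by (simp add: field_simps)
  then have "(\<nu> * R) ^ (2 * N) / (real (N + 1) * 2 ^ (2 * N) * (fact N)\<^sup>2)
      \<le> (\<nu> * R) ^ (2 * k) / (real (k + 1) * 2 ^ (2 * k) * (fact k)\<^sup>2)"
    using decseq_power_div_fact_sq[of "\<nu> * R"] assms by (auto dest: decseqD)
  then have "9 * \<nu>\<^sup>2 / 32 * ((\<nu> * R) ^ (2 * N) / (real (N + 1) * 2 ^ (2 * N) * (fact N)\<^sup>2))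
      \<le> 9 * \<nu>\<^sup>2 / 32 * ((\<nu> * R) ^ (2 * k) / (real (k + 1) * 2 ^ (2 * k) * (fact k)\<^sup>2))"
    by (rule mult_left_mono) simp
  also have "\<dots> \<le> integral {0..\<nu>} (\<lambda>r. r * (besselJ k (r * R))\<^sup>2)"
    using assms \<open>\<nu> * R \<le> 1\<close> by (intro integral_besselJ_sq_ge) auto
  finally show ?thesis .
qed

end
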